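(* Let $R$ be a ring with unity and involution $*$, and let $a\in R$. The following statements are equivalent. (1) $a$ is left dual core invertible. (2) $a$ is left dual $(a,a)$-core invertible. (3) $a$ is left dual $(a,1)$-core invertible. (4) $1$ is left dual $(a,a)$-core invertible. (5) $a$ is left dual $a$-core invertible. (6) $a$ is left dual $1$-core invertible. (7) $a$ is left $(a^*,a)$-invertible.
   Context: An element $a$ is left dual core invertible if there exists $x\in R$ with $axa=a$, $(xa)^*=xa$ and $x^2a=x$. For $u,b,c\in R$, $u$ is left dual $(b,c)$-core invertible if there exists $x\in Rc$ with $bxub=b$ and $(xub)^*=xub$. For $v\in R$, $a$ is left dual $v$-core invertible if there exists $x\in R$ with $axva=a$, $(xva)^*=xva$ and $x^2va=x$. For $u,b,c\in R$, $u$ is left $(b,c)$-invertible if $b\in Rcub$. *)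

theory Defs
  imports Main
begin

definition ring_involution :: "('a::ring_1 \<Rightarrow> 'a) \<Rightarrow> bool" where
  "ring_involution s \<longleftrightarrow>
     (\<forall>x y. s (x + y) = s x + s y) \<and>
     (\<forall>x y. s (x * y) = s y * s x) \<and>
     (\<forall>x. s (s x) = x)"

definition left_dual_core_invertible :: "('a::ring_1 \<Rightarrow> 'a) \<Rightarrow> 'a \<Rightarrow> bool" where
  "left_dual_core_invertible s a \<longleftrightarrow>
     (\<exists>x. a * x * a = a \<and> s (x * a) = x * a \<and> x ^ 2 * a = x)"

definition left_dual_bc_core_invertible :: "('a::ring_1 \<Rightarrow> 'a) \<Rightarrow> 'a \<Rightarrow> 'a \<Rightarrow> 'a \<Rightarrow> bool" where
  "left_dual_bc_core_invertible s u b c \<longleftrightarrow>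
     (\<exists>x. (\<exists>r. x = r * c) \<and> b * x * u * b = b \<and> s (x * u * b) = x * u * b)"

definition left_dual_v_core_invertible :: "('a::ring_1 \<Rightarrow> 'a) \<Rightarrow> 'a \<Rightarrow> 'a \<Rightarrow> bool" where
  "left_dual_v_core_invertible s v a \<longleftrightarrow>
     (\<exists>x. a * x * v * a = a \<and> s (x * v * a) = x * v * a \<and> x ^ 2 * v * a = x)"

definition left_bc_invertible :: "'a::ring_1 \<Rightarrow> 'a \<Rightarrow> 'a \<Rightarrow> bool" where
  "left_bc_invertible u b c \<longleftrightarrow> (\<exists>r. b = r * c * u * b)"

end

theory Submission
  imports Defs
begin

text \<open>All seven conditions reduce to the existence of an element \<open>p \<in> R a a\<close> with
  \<open>a p = a\<close> and \<open>p\<^sup>* = p\<close>. Given such \<open>p = r a a\<close>, the element \<open>r a\<close> is a left dual core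
  inverse of \<open>a\<close>, and \<open>a\<^sup>* = (a p)\<^sup>* = p a\<^sup>* \<in> R a a a\<^sup>*\<close>. Conversely, if \<open>a\<^sup>* = t a\<^sup>*\<close> with
  \<open>t = r a a\<close>, then \<open>a t\<^sup>* = a\<close>, hence \<open>t t\<^sup>* = r a a = t\<close>, which forces \<open>t\<close> to be Hermitian.\<close>

lemma involution_mult: "ring_involution s \<Longrightarrow> s (x * y) = s y * s x"
  unfolding ring_involution_def by blast

lemma involution_involutive: "ring_involution s \<Longrightarrow> s (s x) = x"
  unfolding ring_involution_def by blast

lemma involution_fixed_if_mult_adjoint_eq:
  fixes s :: "'a::ring_1 \<Rightarrow> 'a"
  assumes inv: "ring_involution s" and t: "t * s t = t"
  shows "s t = t"
proof -
  have "s (t * s t) = t * s t"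
    by (simp add: involution_mult[OF inv] involution_involutive[OF inv])
  then show ?thesis using t by simp
qed

lemma adjoint_eq_if_hermitian_right_identity:
  fixes s :: "'a::ring_1 \<Rightarrow> 'a"
  assumes inv: "ring_involution s" and "s p = p" and "a * p = a"
  shows "s a = p * s a"
  by (metis assms involution_mult)

lemma left_bc_invertible_adjoint_iff_hermitian_right_identity:
  fixes s :: "'a::ring_1 \<Rightarrow> 'a"
  assumes inv: "ring_involution s"
  shows "left_bc_invertible a (s a) a \<longleftrightarrow> (\<exists>r. a * (r * a * a) = a \<and> s (r * a * a) = r * a * a)"
proof
  assume "left_bc_invertible a (s a) a"
  then obtain r where r: "s a = r * a * a * s a"
    unfolding left_bc_invertible_def by blast
  define t where "t = r * a * a"
  have "a * s t = s (t * s a)"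
    by (simp add: involution_mult[OF inv] involution_involutive[OF inv])
  also have "\<dots> = a"
    using r by (simp add: t_def involution_involutive[OF inv])
  finally have a_t: "a * s t = a" .
  have "t * s t = r * a * (a * s t)"
    by (simp add: t_def mult.assoc)
  also have "\<dots> = t"
    using a_t by (simp add: t_def)
  finally have "s t = t"
    using involution_fixed_if_mult_adjoint_eq[OF inv] by blast
  then show "\<exists>r. a * (r * a * a) = a \<and> s (r * a * a) = r * a * a"
    using a_t by (auto simp: t_def)
next
  assume "\<exists>r. a * (r * a * a) = a \<and> s (r * a * a) = r * a * a"
  then obtain r where "a * (r * a * a) = a" and "s (r * a * a) = r * a * a"
    by blast
  then have "s a = r * a * a * s a"
    using adjoint_eq_if_hermitian_right_identity[OF inv] by blast
  then show "left_bc_invertible a (s a) a"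
    unfolding left_bc_invertible_def by blast
qed

lemma left_dual_core_invertible_if_hermitian_right_identity:
  fixes s :: "'a::ring_1 \<Rightarrow> 'a"
  assumes a_p: "a * (r * a * a) = a" and herm: "s (r * a * a) = r * a * a"
  shows "left_dual_core_invertible s a"
  unfolding left_dual_core_invertible_def
proof (intro exI conjI)
  show "a * (r * a) * a = a"
    using a_p by (simp add: mult.assoc)
  show "s (r * a * a) = r * a * a"
    by (fact herm)
  have "(r * a) ^ 2 * a = r * (a * (r * a * a))"
    by (simp add: power2_eq_square mult.assoc)
  then show "(r * a) ^ 2 * a = r * a"
    using a_p by (simp add: mult.assoc)
qed

lemma left_dual_bc_core_invertible_a_a_1_iff:
  "left_dual_bc_core_invertible s a a 1 \<longleftrightarrow> (\<exists>r. a * (r * a * a) = a \<and> s (r * a * a) = r * a * a)"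
  unfolding left_dual_bc_core_invertible_def by (auto simp: mult.assoc)

lemma left_dual_bc_core_invertible_1_a_a_iff:
  "left_dual_bc_core_invertible s 1 a a \<longleftrightarrow> (\<exists>r. a * (r * a * a) = a \<and> s (r * a * a) = r * a * a)"
  unfolding left_dual_bc_core_invertible_def by (auto simp: mult.assoc)

lemma left_dual_bc_core_invertible_a_a_1_if_a_a_a:
  "left_dual_bc_core_invertible s a a a \<Longrightarrow> left_dual_bc_core_invertible s a a 1"
  unfolding left_dual_bc_core_invertible_def by auto

lemma left_dual_bc_core_invertible_a_a_1_if_v_core_invertible:
  "left_dual_v_core_invertible s a a \<Longrightarrow> left_dual_bc_core_invertible s a a 1"
  unfolding left_dual_v_core_invertible_def left_dual_bc_core_invertible_def by auto

lemma left_dual_v_core_invertible_1_iff: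
  "left_dual_v_core_invertible s 1 a \<longleftrightarrow> left_dual_core_invertible s a"
  unfolding left_dual_v_core_invertible_def left_dual_core_invertible_def by simp

text \<open>The witness is \<open>x\<^sup>2\<close> for a left dual core inverse \<open>x\<close>: from \<open>x = x\<^sup>2 a\<close> we get
  \<open>x\<^sup>2 a a = x a\<close>, so \<open>x\<^sup>2\<close> inherits the identities of \<open>x\<close>.\<close>

lemma left_dual_core_invertible_imp_square_witness:
  fixes s :: "'a::ring_1 \<Rightarrow> 'a"
  assumes "left_dual_core_invertible s a"
  shows "left_dual_bc_core_invertible s a a a \<and> left_dual_v_core_invertible s a a"
proof -
  obtain x where axa: "a * x * a = a" and herm: "s (x * a) = x * a" and xxa: "x * x * a = x"
    using assms unfolding left_dual_core_invertible_def by (auto simp: power2_eq_square)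
  have xxaa: "x * x * a * a = x * a"
    using xxa by simp
  have a_xx_aa: "a * (x * x) * a * a = a"
    using xxaa axa by (simp add: mult.assoc)
  have xx_in: "x * x = x * x * x * a"
    using xxa by (simp add: mult.assoc)
  have xxxxaa: "(x * x) ^ 2 * a * a = x * x"
    using xxa by (simp add: power2_eq_square mult.assoc)
  have "left_dual_bc_core_invertible s a a a"
    unfolding left_dual_bc_core_invertible_def
    using xx_in a_xx_aa xxaa herm by (intro exI[of _ "x * x"] conjI exI[of _ "x * x * x"]) simp_all
  moreover have "left_dual_v_core_invertible s a a"
    unfolding left_dual_v_core_invertible_def
    using a_xx_aa xxaa herm xxxxaa by (intro exI[of _ "x * x"] conjI) simp_all
  ultimately show ?thesis ..
qed

theorem corollary3p6:
  fixes s :: "'a::ring_1 \<Rightarrow> 'a" and a :: 'a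
  assumes "ring_involution s"
  shows "(left_dual_core_invertible s a \<longleftrightarrow> left_dual_bc_core_invertible s a a a)
       \<and> (left_dual_core_invertible s a \<longleftrightarrow> left_dual_bc_core_invertible s a a 1)
       \<and> (left_dual_core_invertible s a \<longleftrightarrow> left_dual_bc_core_invertible s 1 a a)
       \<and> (left_dual_core_invertible s a \<longleftrightarrow> left_dual_v_core_invertible s a a)
       \<and> (left_dual_core_invertible s a \<longleftrightarrow> left_dual_v_core_invertible s 1 a)
       \<and> (left_dual_core_invertible s a \<longleftrightarrow> left_bc_invertible a (s a) a)"
proof -
  let ?herm_id = "\<exists>r. a * (r * a * a) = a \<and> s (r * a * a) = r * a * a"
  have "?herm_id \<Longrightarrow> left_dual_core_invertible s a"
    using left_dual_core_invertible_if_hermitian_right_identity by blast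
  then show ?thesis
    using left_dual_core_invertible_imp_square_witness[of s a]
      left_dual_bc_core_invertible_a_a_1_if_a_a_a[of s a]
      left_dual_bc_core_invertible_a_a_1_if_v_core_invertible[of s a]
      left_dual_bc_core_invertible_a_a_1_iff[of s a]
      left_dual_bc_core_invertible_1_a_a_iff[of s a]
      left_dual_v_core_invertible_1_iff[of s a]
      left_bc_invertible_adjoint_iff_hermitian_right_identity[OF assms, of a]
    by argo
qed

end
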